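(* For all integers $0\le t\le n$ with $n\ge1$, the exact-$t$ function $f^{=}_{t,n}:\{0,1\}^n\to\{0,1\}$, defined by $f^{=}_{t,n}(x)=1$ if $\sum_{i=1}^n x_i=t$ and $f^{=}_{t,n}(x)=0$ otherwise, has a quadratization using $\lfloor n/2\rfloor$ auxiliary variables.
   Context: A quadratization of $f:\{0,1\}^n\to\mathbb{R}$ using $m$ auxiliary variables is a polynomial $g(x,y)$ of degree at most $2$ in $x_1,\ldots,x_n,y_1,\ldots,y_m$ such that $f(x)=\min\{g(x,y):y\in\{0,1\}^m\}$ for all $x\in\{0,1\}^n$. *)

theory Defs
  imports Complex_Main
begin

text \<open>Points of {0,1}^n are represented as functions nat => real whose values
at indices i < n lie in {0,1}; values at indices >= n are irrelevant.\<close>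

definition binary_vec :: "nat \<Rightarrow> (nat \<Rightarrow> real) \<Rightarrow> bool" where
  "binary_vec n x \<longleftrightarrow> (\<forall>i<n. x i \<in> {0, 1})"

definition deg2_poly :: "nat \<Rightarrow> ((nat \<Rightarrow> real) \<Rightarrow> real) \<Rightarrow> bool" where
  "deg2_poly N g \<longleftrightarrow> (\<exists>(c::real) (a::nat \<Rightarrow> real) (b::nat \<Rightarrow> nat \<Rightarrow> real).
      \<forall>z. g z = c + (\<Sum>i<N. a i * z i) + (\<Sum>i<N. \<Sum>j<N. b i j * z i * z j))"

text \<open>Joint assignment: variables x_1..x_n are z_0..z_(n-1), auxiliary
variables y_1..y_m are z_n..z_(n+m-1).\<close>

definition join_vars :: "nat \<Rightarrow> (nat \<Rightarrow> real) \<Rightarrow> (nat \<Rightarrow> real) \<Rightarrow> nat \<Rightarrow> real" where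
  "join_vars n x y = (\<lambda>i. if i < n then x i else y (i - n))"

definition quadratization ::
  "nat \<Rightarrow> nat \<Rightarrow> ((nat \<Rightarrow> real) \<Rightarrow> real) \<Rightarrow> ((nat \<Rightarrow> real) \<Rightarrow> real) \<Rightarrow> bool" where
  "quadratization n m f g \<longleftrightarrow> deg2_poly (n + m) g \<and>
     (\<forall>x. binary_vec n x \<longrightarrow>
        (\<exists>y. binary_vec m y \<and> g (join_vars n x y) = f x) \<and>
        (\<forall>y. binary_vec m y \<longrightarrow> f x \<le> g (join_vars n x y)))"

definition exact_fn :: "nat \<Rightarrow> nat \<Rightarrow> (nat \<Rightarrow> real) \<Rightarrow> real" where
  "exact_fn t n x = (if (\<Sum>i<n. x i) = real t then 1 else 0)"

end

theory Submission
  imports Defs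
begin

(* Write u = x_1 + ... + x_n - t and consec v = (v - 1)(v - 2), which is nonnegative on the
   integers, vanishes at v = 1, 2 and satisfies consec (-v) = consec v + 6v. The quadratic

     consec (u - 2p) + (consec (-u - 2q) - consec (-u)) + 6uw

   splits as (consec (u - 2p) - consec u) + (consec (-u - 2q) - consec (-u)) + (consec u + 6uw),
   and over integers p, q >= 0 and w in {0, 1} the three summands are minimised independently:
   the first by halving a positive u into {1, 2}, giving -consec u for u > 0 and 0 otherwise; the
   second symmetrically for negative u; the third by the sign of u, giving the smaller of consec u
   and consec (-u). So the minimum is 2 if u = 0 and 0 otherwise, and half the quadratic is the
   quadratization. As u ranges over [-t, n - t], p is a sum of (n - t - 1) div 2 bits and q of
   (t - 1) div 2 bits, and w needs its own bit only when 0 < t < n: at most n div 2 bits in all. *)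

definition consec :: "'a::comm_ring_1 \<Rightarrow> 'a" where
  "consec v = (v - 1) * (v - 2)"

definition zero_gadget :: "'a::comm_ring_1 \<Rightarrow> 'a \<Rightarrow> 'a \<Rightarrow> 'a \<Rightarrow> 'a" where
  "zero_gadget u p q w = consec (u - 2 * p) + (consec (- u - 2 * q) - consec (- u)) + 6 * u * w"

lemma of_int_zero_gadget:
  "zero_gadget (of_int u) (of_int p) (of_int q) (of_int w) =
    (of_int (zero_gadget u p q w) :: 'a::comm_ring_1)"
  by (simp add: zero_gadget_def consec_def)

lemma consec_nonneg: "0 \<le> consec (v::int)"
  by (cases "v \<le> 1") (simp_all add: consec_def zero_le_mult_iff)

lemma consec_uminus: "consec (- v) = consec v + 6 * (v::'a::comm_ring_1)"
  by (simp add: consec_def algebra_simps)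

lemma consec_le_shift:
  fixes v p :: int
  assumes "v \<le> 1" and "0 \<le> p"
  shows "consec v \<le> consec (v - 2 * p)"
proof -
  have "consec (v - 2 * p) = consec v + 2 * p * (2 * p - 2 * v + 3)"
    by (simp add: consec_def algebra_simps)
  moreover have "0 \<le> 2 * p * (2 * p - 2 * v + 3)"
    using assms by simp
  ultimately show ?thesis by linarith
qed

lemma consec_halve_to_zero:
  fixes v :: int
  assumes "1 \<le> v"
  shows "consec (v - 2 * ((v - 1) div 2)) = 0"
proof -
  have "v - 2 * ((v - 1) div 2) \<in> {1, 2}"
    by auto
  then show ?thesis by (auto simp: consec_def)
qed

lemma zero_gadget_lower_bound:
  fixes u p q w :: int
  assumes "0 \<le> p" and "0 \<le> q" and "w \<in> {0, 1}"
  shows "2 * of_bool (u = 0) \<le> zero_gadget u p q w"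
proof -
  consider "1 \<le> u" | "u = 0" | "u \<le> -1" by linarith
  then show ?thesis
  proof cases
    case 1
    then have "consec (- u) \<le> consec (- u - 2 * q)" "0 \<le> 6 * u * w"
      using assms consec_le_shift[of "- u" q] by auto
    then show ?thesis
      using 1 consec_nonneg[of "u - 2 * p"] unfolding zero_gadget_def by simp
  next
    case 2
    then show ?thesis
      using assms consec_le_shift[of 0 p] consec_le_shift[of 0 q]
      by (simp add: zero_gadget_def consec_def)
  next
    case 3
    then have "consec u \<le> consec (u - 2 * p)" "6 * u \<le> 6 * u * w"
      using assms consec_le_shift[of u p] by auto
    moreover have "of_bool (u = 0) = (0::int)"
      using 3 by simp
    ultimately show ?thesis
      using consec_nonneg[of "- u - 2 * q"] consec_uminus[of u]
      unfolding zero_gadget_def by linarith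
  qed
qed

lemma zero_gadget_attains_lower_bound:
  fixes u w :: int
  assumes "u < 0 \<Longrightarrow> w = 1" and "0 < u \<Longrightarrow> w = 0"
  shows "zero_gadget u (max 0 ((u - 1) div 2)) (max 0 ((- u - 1) div 2)) w = 2 * of_bool (u = 0)"
proof -
  consider "1 \<le> u" | "u = 0" | "u \<le> -1" by linarith
  then show ?thesis
  proof cases
    case 1
    then show ?thesis
      using assms consec_halve_to_zero[of u] by (simp add: zero_gadget_def max_def)
  next
    case 2
    then show ?thesis by (simp add: zero_gadget_def consec_def)
  next
    case 3
    then show ?thesis
      using assms consec_halve_to_zero[of "- u"] consec_uminus[of u]
      by (simp add: zero_gadget_def max_def)
  qed
qed

definition affine_form :: "nat \<Rightarrow> ((nat \<Rightarrow> real) \<Rightarrow> real) \<Rightarrow> bool" where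
  "affine_form N f \<longleftrightarrow> (\<exists>c a. \<forall>z. f z = c + (\<Sum>i<N. a i * z i))"

lemma affine_form_const: "affine_form N (\<lambda>z. c)"
  unfolding affine_form_def by (intro exI[of _ c] exI[of _ "\<lambda>_. 0"]) simp

lemma affine_form_sum_vars:
  assumes "I \<subseteq> {..<N}"
  shows "affine_form N (\<lambda>z. \<Sum>i\<in>I. z i)"
proof -
  have "(\<Sum>i<N. of_bool (i \<in> I) * z i) = (\<Sum>i\<in>I. z i)" for z :: "nat \<Rightarrow> real"
  proof -
    have "(\<Sum>i<N. of_bool (i \<in> I) * z i) = (\<Sum>i\<in>{..<N} \<inter> I. z i)"
      by (simp add: sum.inter_restrict if_distrib)
    then show ?thesis
      using assms by (simp add: Int_absorb1)
  qed
  then show ?thesis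
    unfolding affine_form_def by (intro exI[of _ 0] exI[of _ "\<lambda>i. of_bool (i \<in> I)"]) simp
qed

lemma affine_form_add:
  assumes "affine_form N f" and "affine_form N g"
  shows "affine_form N (\<lambda>z. f z + g z)"
proof -
  obtain c a d b
    where "\<forall>z. f z = c + (\<Sum>i<N. a i * z i)" and "\<forall>z. g z = d + (\<Sum>i<N. b i * z i)"
    using assms unfolding affine_form_def by blast
  then show ?thesis
    unfolding affine_form_def
    by (intro exI[of _ "c + d"] exI[of _ "\<lambda>i. a i + b i"]) (simp add: sum.distrib algebra_simps)
qed

lemma affine_form_scale:
  assumes "affine_form N f"
  shows "affine_form N (\<lambda>z. k * f z)"
proof -
  obtain c a where "\<forall>z. f z = c + (\<Sum>i<N. a i * z i)"
    using assms unfolding affine_form_def by blast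
  then show ?thesis
    unfolding affine_form_def
    by (intro exI[of _ "k * c"] exI[of _ "\<lambda>i. k * a i"]) (simp add: sum_distrib_left algebra_simps)
qed

lemma affine_form_diff:
  assumes "affine_form N f" and "affine_form N g"
  shows "affine_form N (\<lambda>z. f z - g z)"
  using affine_form_add[OF assms(1) affine_form_scale[OF assms(2), of "- 1"]] by simp

lemma affine_form_uminus:
  assumes "affine_form N f"
  shows "affine_form N (\<lambda>z. - f z)"
  using affine_form_scale[OF assms, of "- 1"] by simp

lemma deg2_poly_mult:
  assumes "affine_form N f" and "affine_form N g"
  shows "deg2_poly N (\<lambda>z. f z * g z)"
proof -
  obtain c a d b
    where f: "\<forall>z. f z = c + (\<Sum>i<N. a i * z i)" and g: "\<forall>z. g z = d + (\<Sum>i<N. b i * z i)"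
    using assms unfolding affine_form_def by blast
  have product: "f z * g z =
      c * d + (\<Sum>i<N. (c * b i + d * a i) * z i) + (\<Sum>i<N. \<Sum>j<N. a i * b j * z i * z j)" for z
  proof -
    have "(\<Sum>i<N. a i * z i) * (\<Sum>j<N. b j * z j) = (\<Sum>i<N. \<Sum>j<N. a i * b j * z i * z j)"
      by (simp add: sum_product algebra_simps)
    then show ?thesis
      by (simp add: f g sum.distrib sum_distrib_left algebra_simps)
  qed
  show ?thesis
    unfolding deg2_poly_def
    by (intro exI[of _ "c * d"] exI[of _ "\<lambda>i. c * b i + d * a i"] exI[of _ "\<lambda>i j. a i * b j"]
        allI)
      (rule product)
qed

lemma deg2_poly_add:
  assumes "deg2_poly N f" and "deg2_poly N g"
  shows "deg2_poly N (\<lambda>z. f z + g z)"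
proof -
  obtain c a b c' a' b' where
    "\<forall>z. f z = c + (\<Sum>i<N. a i * z i) + (\<Sum>i<N. \<Sum>j<N. b i j * z i * z j)" and
    "\<forall>z. g z = c' + (\<Sum>i<N. a' i * z i) + (\<Sum>i<N. \<Sum>j<N. b' i j * z i * z j)"
    using assms unfolding deg2_poly_def by blast
  then show ?thesis
    unfolding deg2_poly_def
    by (intro exI[of _ "c + c'"] exI[of _ "\<lambda>i. a i + a' i"] exI[of _ "\<lambda>i j. b i j + b' i j"])
      (simp add: sum.distrib algebra_simps)
qed

lemma deg2_poly_scale:
  assumes "deg2_poly N f"
  shows "deg2_poly N (\<lambda>z. k * f z)"
proof -
  obtain c a b where "\<forall>z. f z = c + (\<Sum>i<N. a i * z i) + (\<Sum>i<N. \<Sum>j<N. b i j * z i * z j)"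
    using assms unfolding deg2_poly_def by blast
  then show ?thesis
    unfolding deg2_poly_def
    by (intro exI[of _ "k * c"] exI[of _ "\<lambda>i. k * a i"] exI[of _ "\<lambda>i j. k * b i j"])
      (simp add: sum_distrib_left algebra_simps)
qed

lemma deg2_poly_diff:
  assumes "deg2_poly N f" and "deg2_poly N g"
  shows "deg2_poly N (\<lambda>z. f z - g z)"
  using deg2_poly_add[OF assms(1) deg2_poly_scale[OF assms(2), of "- 1"]] by simp

lemma deg2_poly_zero_gadget:
  assumes "affine_form N u" "affine_form N p" "affine_form N q" "affine_form N w"
  shows "deg2_poly N (\<lambda>z. zero_gadget (u z) (p z) (q z) (w z))"
  unfolding zero_gadget_def consec_def
  by (intro deg2_poly_add deg2_poly_diff deg2_poly_mult affine_form_diff affine_form_scale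
      affine_form_uminus affine_form_const assms)

definition block :: "nat \<Rightarrow> nat \<Rightarrow> (nat \<Rightarrow> real) \<Rightarrow> real" where
  "block a c z = (\<Sum>i<c. z (a + i))"

lemma affine_form_block:
  assumes "a + c \<le> N"
  shows "affine_form N (block a c)"
proof -
  have "block a c = (\<lambda>z. \<Sum>i\<in>(+) a ` {..<c}. z i)"
    by (simp add: block_def sum.reindex fun_eq_iff)
  moreover have "(+) a ` {..<c} \<subseteq> {..<N}"
    using assms by auto
  ultimately show ?thesis
    by (simp add: affine_form_sum_vars)
qed

lemma block_join_vars: "block (n + a) c (join_vars n x y) = block a c y"
  by (simp add: block_def join_vars_def)

lemma block_join_vars_prefix: "block 0 n (join_vars n x y) = (\<Sum>i<n. x i)"
  by (simp add: block_def join_vars_def)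

lemma sum_binary_eq_card:
  assumes "finite I" and "\<forall>i\<in>I. z i \<in> {0, 1}"
  shows "(\<Sum>i\<in>I. z i) = real (card {i\<in>I. z i = 1})"
proof -
  have "(\<Sum>i\<in>I. z i) = (\<Sum>i\<in>I. of_bool (z i = 1))"
    using assms(2) by (intro sum.cong) auto
  then show ?thesis
    using assms(1) by (simp add: Collect_conj_eq Int_commute)
qed

lemma block_binary:
  assumes "binary_vec m z" and "a + c \<le> m"
  obtains k where "k \<le> c" and "block a c z = real k"
proof
  have "\<forall>i<c. z (a + i) \<in> {0, 1}"
    using assms unfolding binary_vec_def by auto
  then show "block a c z = real (card {i\<in>{..<c}. z (a + i) = 1})"
    unfolding block_def by (simp add: sum_binary_eq_card)
  have "card {i\<in>{..<c}. z (a + i) = 1} \<le> card {..<c}"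
    by (rule card_mono) auto
  then show "card {i\<in>{..<c}. z (a + i) = 1} \<le> c"
    by simp
qed

lemma block_initial_ones:
  assumes "k \<le> c" and "\<forall>i<c. z (a + i) = of_bool (i < k)"
  shows "block a c z = real k"
proof -
  have "block a c z = (\<Sum>i<c. of_bool (i < k))"
    unfolding block_def using assms(2) by simp
  also have "\<dots> = real (card {..<k})"
    using assms(1) by (simp add: Int_absorb1 lessThan_def[symmetric])
  finally show ?thesis
    by simp
qed

(* Truncated subtraction makes excess_vars n n = 0 and deficit_vars 0 = 0. *)

definition excess_vars :: "nat \<Rightarrow> nat \<Rightarrow> nat" where
  "excess_vars n t = (n - t - 1) div 2"

definition deficit_vars :: "nat \<Rightarrow> nat" where
  "deficit_vars t = (t - 1) div 2"

definition sign_vars :: "nat \<Rightarrow> nat \<Rightarrow> nat" where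
  "sign_vars n t = of_bool (0 < t \<and> t < n)"

lemma aux_vars_count:
  assumes "t \<le> n"
  shows "excess_vars n t + deficit_vars t + sign_vars n t \<le> n div 2"
  using assms unfolding excess_vars_def deficit_vars_def sign_vars_def by auto

(* For t = n the sum of x never exceeds t and for t = 0 it never falls below t, so there the
   sign variable w is the constant 1 resp. 0 instead of an auxiliary bit. *)

definition exact_quad :: "nat \<Rightarrow> nat \<Rightarrow> (nat \<Rightarrow> real) \<Rightarrow> real" where
  "exact_quad n t z =
     zero_gadget (block 0 n z - real t)
       (block n (excess_vars n t) z)
       (block (n + excess_vars n t) (deficit_vars t) z)
       (of_bool (t = n) + block (n + excess_vars n t + deficit_vars t) (sign_vars n t) z) / 2"

lemma deg2_poly_exact_quad:
  assumes "t \<le> n"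
  shows "deg2_poly (n + n div 2) (exact_quad n t)"
proof -
  have "n + excess_vars n t + deficit_vars t + sign_vars n t \<le> n + n div 2"
    using aux_vars_count[OF assms] by simp
  then have "deg2_poly (n + n div 2) (\<lambda>z. zero_gadget (block 0 n z - real t)
       (block n (excess_vars n t) z)
       (block (n + excess_vars n t) (deficit_vars t) z)
       (of_bool (t = n) + block (n + excess_vars n t + deficit_vars t) (sign_vars n t) z))"
    by (intro deg2_poly_zero_gadget affine_form_diff affine_form_add affine_form_const
        affine_form_block) auto
  from deg2_poly_scale[OF this, of "1 / 2"] show ?thesis
    by (simp add: exact_quad_def[abs_def])
qed

lemma exact_quad_join_vars:
  assumes "(\<Sum>i<n. x i) = real k"
    and "block 0 (excess_vars n t) y = real p"
    and "block (excess_vars n t) (deficit_vars t) y = real q"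
    and "block (excess_vars n t + deficit_vars t) (sign_vars n t) y = real r"
  shows "exact_quad n t (join_vars n x y) =
    of_int (zero_gadget (int k - int t) (int p) (int q) (of_bool (t = n) + int r)) / 2"
proof -
  have "exact_quad n t (join_vars n x y) =
      zero_gadget (of_int (int k - int t)) (of_int (int p)) (of_int (int q))
        (of_int (of_bool (t = n) + int r)) / 2"
    using assms block_join_vars[of n 0] block_join_vars[of n "excess_vars n t"]
      block_join_vars[of n "excess_vars n t + deficit_vars t"]
    by (simp add: exact_quad_def block_join_vars_prefix add.assoc)
  then show ?thesis
    by (simp only: of_int_zero_gadget)
qed

lemma exact_quad_lower_bound:
  assumes "t \<le> n" and "binary_vec n x" and "binary_vec (n div 2) y"
  shows "exact_fn t n x \<le> exact_quad n t (join_vars n x y)"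
proof -
  define a b s where "a = excess_vars n t" and "b = deficit_vars t" and "s = sign_vars n t"
  have count: "a + b + s \<le> n div 2"
    using aux_vars_count[OF assms(1)] by (simp add: a_def b_def s_def)
  obtain k where k: "(\<Sum>i<n. x i) = real k"
    using block_binary[OF assms(2), of 0 n] by (auto simp: block_def)
  obtain p where p: "block 0 a y = real p"
    using block_binary[OF assms(3), of 0 a] count by auto
  obtain q where q: "block a b y = real q"
    using block_binary[OF assms(3), of a b] count by auto
  obtain r where r: "r \<le> s" "block (a + b) s y = real r"
    using block_binary[OF assms(3), of "a + b" s] count by auto
  define u where "u = int k - int t"
  define w where "w = of_bool (t = n) + int r"
  have "w \<in> {0, 1}"
    using r(1) by (auto simp: w_def s_def sign_vars_def of_bool_def split: if_splits)
  have "exact_quad n t (join_vars n x y) = of_int (zero_gadget u (int p) (int q) w) / 2"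
    using exact_quad_join_vars[OF k] p q r(2) by (simp add: u_def w_def flip: a_def b_def s_def)
  also have "\<dots> \<ge> of_bool (u = 0)"
    using zero_gadget_lower_bound[of "int p" "int q" w u] \<open>w \<in> {0, 1}\<close>
    by (cases "u = 0") simp_all
  also have "of_bool (u = 0) = exact_fn t n x"
    using k by (simp add: exact_fn_def u_def)
  finally show ?thesis .
qed

lemma exact_quad_attains:
  assumes "t \<le> n" and "binary_vec n x"
  obtains y where "binary_vec (n div 2) y" and "exact_quad n t (join_vars n x y) = exact_fn t n x"
proof -
  define a b s where "a = excess_vars n t" and "b = deficit_vars t" and "s = sign_vars n t"
  obtain k where k: "k \<le> n" "(\<Sum>i<n. x i) = real k"
    using block_binary[OF assms(2), of 0 n] by (auto simp: block_def)
  define u where "u = int k - int t"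
  define p where "p = nat ((u - 1) div 2)"
  define q where "q = nat ((- u - 1) div 2)"
  define r :: nat where "r = of_bool (0 < t \<and> t < n \<and> k < t)"
  have gadget_args: "int p = max 0 ((u - 1) div 2)" "int q = max 0 ((- u - 1) div 2)"
    by (simp_all add: p_def q_def max_def)
  have "p \<le> a" "q \<le> b" "r \<le> s"
    using k(1) by (auto simp: p_def q_def r_def u_def a_def b_def s_def excess_vars_def
        deficit_vars_def sign_vars_def nat_le_iff)
  define y :: "nat \<Rightarrow> real" where
    "y i = of_bool (i < p \<or> a \<le> i \<and> i < a + q \<or> a + b \<le> i \<and> i < a + b + r)" for i
  have binary: "binary_vec (n div 2) y"
    by (simp add: binary_vec_def y_def)
  have "block 0 a y = real p" "block a b y = real q" "block (a + b) s y = real r"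
    using \<open>p \<le> a\<close> \<open>q \<le> b\<close> \<open>r \<le> s\<close> by (auto intro!: block_initial_ones simp: y_def)
  then have "exact_quad n t (join_vars n x y) =
      of_int (zero_gadget u (int p) (int q) (of_bool (t = n) + int r)) / 2"
    using exact_quad_join_vars[OF k(2)] by (simp add: u_def flip: a_def b_def s_def)
  also have "\<dots> = of_bool (u = 0)"
    using assms(1) k(1) unfolding gadget_args
    by (subst zero_gadget_attains_lower_bound) (auto simp: r_def u_def)
  also have "\<dots> = exact_fn t n x"
    using k(2) by (simp add: exact_fn_def u_def)
  finally show ?thesis
    using that binary by blast
qed

theorem corollary4:
  fixes n t :: nat
  assumes "1 \<le> n" and "t \<le> n"
  shows "\<exists>g. quadratization n (n div 2) (exact_fn t n) g"
proof -
  have "quadratization n (n div 2) (exact_fn t n) (exact_quad n t)"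
    unfolding quadratization_def
  proof (intro conjI allI impI)
    show "deg2_poly (n + n div 2) (exact_quad n t)"
      using assms(2) by (rule deg2_poly_exact_quad)
  next
    fix x assume "binary_vec n x"
    then show "\<exists>y. binary_vec (n div 2) y \<and> exact_quad n t (join_vars n x y) = exact_fn t n x"
      using assms(2) exact_quad_attains by metis
  next
    fix x y assume "binary_vec n x" and "binary_vec (n div 2) y"
    then show "exact_fn t n x \<le> exact_quad n t (join_vars n x y)"
      by (rule exact_quad_lower_bound[OF assms(2)])
  qed
  then show ?thesis
    by blast
qed

end
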